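(* Let $x,y$ be any elements with $x+y=u_3+u_4$ and $xy=u_1u_2$. Then for every $n\ge0$, $$P_n(u_1,u_2,u_3,u_4\mid\alpha,\beta)=\sum_{k=0}^n\binom nk A_k(x,y\mid0,\alpha+\beta)\bigl(\alpha x-\beta y+(\beta-\alpha)u_3\bigr)^{n-k}=\sum_{k=0}^n\binom nk A_k(x,y\mid\alpha+\beta,0)\bigl(\alpha y-\beta x+(\beta-\alpha)u_3\bigr)^{n-k}.$$
   Context: For $\sigma=\sigma_1\cdots\sigma_m\in\mathfrak S_m$: ${\rm asc}(\sigma)$, ${\rm des}(\sigma)$ are the numbers of $i\in[m-1]$ with $\sigma_i<\sigma_{i+1}$, resp. $\sigma_i>\sigma_{i+1}$; ${\rm LRmax}(\sigma)$ is the number of $i$ with $\sigma_j<\sigma_i$ for all $j<i$; ${\rm RLmax}(\sigma)$ is the number of $i$ with $\sigma_j<\sigma_i$ for all $j>i$. With the convention $\sigma_0=\sigma_{m+1}=0$: ${\rm W}(\sigma)$ is the number of $i\in[m]$ with $\sigma_{i-1}<\sigma_i>\sigma_{i+1}$; ${\rm V}(\sigma)$ is the number of $i$ with $1<i<m$ and $\sigma_{i-1}>\sigma_i<\sigma_{i+1}$; ${\rm rdd}(\sigma)$ is the number of $i$ with $1<i\le m$ and $\sigma_{i-1}>\sigma_i>\sigma_{i+1}$; ${\rm lda}(\sigma)$ is the number of $i$ with $1\le i<m$ and $\sigma_{i-1}<\sigma_i<\sigma_{i+1}$. Define $$P_n(u_1,u_2,u_3,u_4\mid\alpha,\beta)=\sum_{\sigma\in\mathfrak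 S_{n+1}}u_1^{{\rm V}(\sigma)}u_2^{{\rm W}(\sigma)-1}u_3^{{\rm rdd}(\sigma)}u_4^{{\rm lda}(\sigma)}\alpha^{{\rm LRmax}(\sigma)-1}\beta^{{\rm RLmax}(\sigma)-1},$$ and $A_n(x,y\mid\alpha,\beta)=\sum_{\sigma\in\mathfrak S_{n+1}}x^{{\rm asc}(\sigma)}y^{{\rm des}(\sigma)}\alpha^{{\rm LRmax}(\sigma)-1}\beta^{{\rm RLmax}(\sigma)-1}$ for $n\ge0$ (so $A_0=1$). *)

theory Defs
  imports Main
begin

text \<open>Permutations of [m] as lists; sigma_i is the i-th entry (1-based).
  The padded value with sigma_0 = sigma_(m+1) = 0.\<close>

definition perms :: "nat \<Rightarrow> nat list set" where
  "perms m = {xs. distinct xs \<and> set xs = {1..m}}"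

definition pv :: "nat list \<Rightarrow> nat \<Rightarrow> nat" where
  "pv xs i = (if 1 \<le> i \<and> i \<le> length xs then xs ! (i - 1) else 0)"

definition asc :: "nat list \<Rightarrow> nat" where
  "asc xs = card {i \<in> {1..<length xs}. pv xs i < pv xs (i+1)}"

definition des :: "nat list \<Rightarrow> nat" where
  "des xs = card {i \<in> {1..<length xs}. pv xs i > pv xs (i+1)}"

definition LRmax :: "nat list \<Rightarrow> nat" where
  "LRmax xs = card {i \<in> {1..length xs}. \<forall>j \<in> {1..<i}. pv xs j < pv xs i}"

definition RLmax :: "nat list \<Rightarrow> nat" where
  "RLmax xs = card {i \<in> {1..length xs}. \<forall>j \<in> {i<..length xs}. pv xs j < pv xs i}"

definition peaksW :: "nat list \<Rightarrow> nat" where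
  "peaksW xs = card {i \<in> {1..length xs}. pv xs (i-1) < pv xs i \<and> pv xs i > pv xs (i+1)}"

definition valleysV :: "nat list \<Rightarrow> nat" where
  "valleysV xs = card {i \<in> {2..<length xs}. pv xs (i-1) > pv xs i \<and> pv xs i < pv xs (i+1)}"

definition rdd :: "nat list \<Rightarrow> nat" where
  "rdd xs = card {i \<in> {2..length xs}. pv xs (i-1) > pv xs i \<and> pv xs i > pv xs (i+1)}"

definition lda :: "nat list \<Rightarrow> nat" where
  "lda xs = card {i \<in> {1..<length xs}. pv xs (i-1) < pv xs i \<and> pv xs i < pv xs (i+1)}"

definition Ppoly :: "nat \<Rightarrow> 'a::comm_ring_1 \<Rightarrow> 'a \<Rightarrow> 'a \<Rightarrow> 'a \<Rightarrow> 'a \<Rightarrow> 'a \<Rightarrow> 'a" where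
  "Ppoly n u1 u2 u3 u4 \<alpha> \<beta> = (\<Sum>\<sigma>\<in>perms (n+1).
     u1 ^ valleysV \<sigma> * u2 ^ (peaksW \<sigma> - 1) * u3 ^ rdd \<sigma> * u4 ^ lda \<sigma> *
     \<alpha> ^ (LRmax \<sigma> - 1) * \<beta> ^ (RLmax \<sigma> - 1))"

definition Apoly :: "nat \<Rightarrow> 'a::comm_ring_1 \<Rightarrow> 'a \<Rightarrow> 'a \<Rightarrow> 'a \<Rightarrow> 'a" where
  "Apoly n x y \<alpha> \<beta> = (\<Sum>\<sigma>\<in>perms (n+1).
     x ^ asc \<sigma> * y ^ des \<sigma> * \<alpha> ^ (LRmax \<sigma> - 1) * \<beta> ^ (RLmax \<sigma> - 1))"

end

theory Submission
  imports Defs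
begin

text \<open>Cut a permutation of [n+1] at its maximum. All statistics involved are products of local factors,
  one per entry, each depending only on how the entry compares with its two neighbours; so the left part,
  the maximum and the right part contribute independently. Cutting repeatedly at the records expresses
  both P(n) and A(n) as E(a)(n), where E(a)(0) = 1 and E(a)(n+1) = \<Sum>j. C(n,j) E(a)(j) a(n-j), i.e.
  E(a) = exp \<integral>a for exponential generating functions, and a(m) is the weight of a record together with
  the m smaller entries up to the next record. Those entries are counted by a polynomial which, multiplied
  by one peak weight, depends only on u1 u2 and u3 + u4, that is, on x y and x + y. Hence the sequences
  for P and A differ only at m = 0, and E(a + c [m = 0])(n) = \<Sum>k. C(n,k) E(a)(k) c^(n-k) is the binomial sum.\<close>

section \<open>Binomial convolution\<close>

definition binom_conv :: "(nat \<Rightarrow> 'a::comm_ring_1) \<Rightarrow> (nat \<Rightarrow> 'a) \<Rightarrow> nat \<Rightarrow> 'a" where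
  "binom_conv s t n = (\<Sum>k=0..n. of_nat (n choose k) * s k * t (n - k))"

lemma binom_conv_0 [simp]: "binom_conv s t 0 = s 0 * t 0"
  by (simp add: binom_conv_def)

lemma binom_conv_cong:
  assumes "\<And>m. m \<le> n \<Longrightarrow> s m = s' m" "\<And>m. m \<le> n \<Longrightarrow> t m = t' m"
  shows "binom_conv s t n = binom_conv s' t' n"
  unfolding binom_conv_def by (rule sum.cong) (auto simp: assms)

lemma binom_conv_commute: "binom_conv s t n = binom_conv t s n"
proof -
  have "binom_conv s t n = (\<Sum>k=0..n. of_nat (n choose (n - k)) * s (n - k) * t (n - (n - k)))"
    unfolding binom_conv_def by (subst sum.atLeastAtMost_rev) simp
  also have "\<dots> = binom_conv t s n"
    unfolding binom_conv_def by (rule sum.cong) (auto simp: binomial_symmetric[symmetric] mult_ac)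
  finally show ?thesis .
qed

lemma binom_conv_add_right: "binom_conv s (\<lambda>m. a m + b m) n = binom_conv s a n + binom_conv s b n"
  unfolding binom_conv_def by (simp add: distrib_left sum.distrib)

lemma binom_conv_add_left: "binom_conv (\<lambda>m. a m + b m) t n = binom_conv a t n + binom_conv b t n"
  by (simp add: binom_conv_commute[of _ t] binom_conv_add_right)

text \<open>Leibniz rule: binomial convolution multiplies exponential generating functions.\<close>

lemma binom_conv_Suc:
  "binom_conv s t (Suc n) = binom_conv (\<lambda>m. s (Suc m)) t n + binom_conv s (\<lambda>m. t (Suc m)) n"
proof -
  let ?s' = "\<lambda>m. s (Suc m)" and ?t' = "\<lambda>m. t (Suc m)"
  have "binom_conv s t (Suc n)
      = s 0 * t (Suc n) + (\<Sum>k=0..n. of_nat (Suc n choose Suc k) * s (Suc k) * t (n - k))"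
    unfolding binom_conv_def by (subst sum.atLeast0_atMost_Suc_shift) simp
  also have "(\<Sum>k=0..n. of_nat (Suc n choose Suc k) * s (Suc k) * t (n - k))
      = (\<Sum>k=0..n. of_nat (n choose Suc k) * s (Suc k) * t (n - k)) + binom_conv ?s' t n"
    unfolding binom_conv_def sum.distrib[symmetric] by (rule sum.cong) (simp_all add: algebra_simps)
  also have "s 0 * t (Suc n) + ((\<Sum>k=0..n. of_nat (n choose Suc k) * s (Suc k) * t (n - k))
        + binom_conv ?s' t n)
      = (\<Sum>k=0..Suc n. of_nat (n choose k) * s k * t (Suc n - k)) + binom_conv ?s' t n"
    by (subst sum.atLeast0_atMost_Suc_shift) simp
  also have "(\<Sum>k=0..Suc n. of_nat (n choose k) * s k * t (Suc n - k))
      = (\<Sum>k=0..n. of_nat (n choose k) * s k * t (Suc n - k))"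
    by (simp add: sum.atLeast0_atMost_Suc binomial_eq_0)
  also have "\<dots> = binom_conv s ?t' n"
    unfolding binom_conv_def by (rule sum.cong) (auto simp: Suc_diff_le)
  finally show ?thesis by (simp add: algebra_simps)
qed

lemma binom_conv_assoc: "binom_conv (binom_conv s t) u n = binom_conv s (binom_conv t u) n"
proof (induction n arbitrary: s t u)
  case 0 then show ?case by (simp add: mult.assoc)
next
  case (Suc n)
  have shift: "(\<lambda>m. binom_conv s t (Suc m))
      = (\<lambda>m. binom_conv (\<lambda>m. s (Suc m)) t m + binom_conv s (\<lambda>m. t (Suc m)) m)" for s t :: "nat \<Rightarrow> 'a"
    by (simp add: binom_conv_Suc)
  show ?case
    by (simp only: binom_conv_Suc shift binom_conv_add_left binom_conv_add_right Suc.IH add.assoc)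
qed

text \<open>\<open>binom_exp a\<close> has exponential generating function \<open>exp (\<integral> A)\<close> where \<open>A\<close> is that of \<open>a\<close>;
  the recursion is the coefficientwise form of \<open>F' = F A\<close>, which needs no division.\<close>

fun binom_exp :: "(nat \<Rightarrow> 'a::comm_ring_1) \<Rightarrow> nat \<Rightarrow> 'a" where
  "binom_exp a 0 = 1"
| "binom_exp a (Suc n) = (\<Sum>j=0..n. of_nat (n choose j) * binom_exp a j * a (n - j))"

lemma binom_exp_Suc_conv: "binom_exp a (Suc n) = binom_conv (binom_exp a) a n"
  by (simp add: binom_conv_def)

declare binom_exp.simps(2) [simp del]

lemma binom_exp_unique:
  assumes "f 0 = 1" "\<And>n. f (Suc n) = binom_conv f a n"
  shows "f n = binom_exp a n"
proof (induction n rule: less_induct)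
  case (less n)
  show ?case
  proof (cases n)
    case 0 then show ?thesis using assms by simp
  next
    case (Suc m)
    have "f (Suc m) = binom_conv f a m" by (rule assms(2))
    also have "\<dots> = binom_conv (binom_exp a) a m" by (rule binom_conv_cong) (auto simp: less Suc)
    finally show ?thesis using Suc by (simp only: binom_exp_Suc_conv)
  qed
qed

lemma binom_conv_binom_exp: "binom_conv (binom_exp a) (binom_exp b) n = binom_exp (\<lambda>m. a m + b m) n"
proof (rule binom_exp_unique)
  fix n
  let ?E = "binom_conv (binom_exp a) (binom_exp b)"
  have "binom_conv (binom_conv (binom_exp a) a) (binom_exp b) n
      = binom_conv (binom_exp a) (binom_conv (binom_exp b) a) n"
    by (simp add: binom_conv_assoc binom_conv_commute[of a] cong: binom_conv_cong)
  then have "binom_conv (binom_conv (binom_exp a) a) (binom_exp b) n = binom_conv ?E a n"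
    by (simp add: binom_conv_assoc)
  then show "?E (Suc n) = binom_conv ?E (\<lambda>m. a m + b m) n"
    by (simp add: binom_conv_Suc binom_exp_Suc_conv binom_conv_add_right binom_conv_assoc)
qed simp

lemma binom_exp_const: "binom_exp (\<lambda>m. if m = 0 then c else 0) n = c ^ n"
proof (induction n)
  case (Suc n)
  have "binom_exp (\<lambda>m. if m = 0 then c else 0) (Suc n) = (\<Sum>j=0..n. if j = n then c ^ n * c else 0)"
    unfolding binom_exp.simps(2) by (rule sum.cong) (auto simp: Suc)
  then show ?case by (simp add: mult_ac)
qed simp

lemma binom_conv_power:
  "(\<Sum>k=0..n. of_nat (n choose k) * binom_exp a k * c ^ (n - k))
     = binom_exp (\<lambda>m. a m + (if m = 0 then c else 0)) n"
  by (simp add: binom_conv_binom_exp[symmetric] binom_exp_const binom_conv_def)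

section \<open>Arrangements of a finite set\<close>

definition arrangements :: "nat set \<Rightarrow> nat list set" where
  "arrangements S = {xs. distinct xs \<and> set xs = S}"

lemma arrangements_empty [simp]: "arrangements {} = {[]}"
  unfolding arrangements_def by auto

lemma finite_arrangements: "finite S \<Longrightarrow> finite (arrangements S)"
  unfolding arrangements_def by (rule finite_subset[OF _ finite_subset_distinct[of S]]) auto

lemma length_arrangement: "xs \<in> arrangements S \<Longrightarrow> length xs = card S"
  unfolding arrangements_def using distinct_card by fastforce

lemma inj_on_arrangements_split:
  "inj_on (\<lambda>(T, l, r). l @ M # r) (SIGMA T:Pow (S - {M}). arrangements T \<times> arrangements (S - {M} - T))"
proof (rule inj_onI)
  fix p q
  assume "p \<in> (SIGMA T:Pow (S - {M}). arrangements T \<times> arrangements (S - {M} - T))"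
    and "q \<in> (SIGMA T:Pow (S - {M}). arrangements T \<times> arrangements (S - {M} - T))"
  moreover obtain T l r T' l' r' where p: "p = (T, l, r)" and q: "q = (T', l', r')"
    by (cases p, cases q) auto
  ultimately have "set l = T" "set l' = T'" "M \<notin> set l" "M \<notin> set r"
    by (auto simp: arrangements_def)
  moreover assume "(case p of (T, l, r) \<Rightarrow> l @ M # r) = (case q of (T, l, r) \<Rightarrow> l @ M # r)"
  ultimately show "p = q"
    unfolding p q using append_Cons_eq_iff[of M l r l' r'] by auto
qed

lemma bij_betw_arrangements_split:
  assumes "M \<in> S"
  shows "bij_betw (\<lambda>(T, l, r). l @ M # r)
           (SIGMA T:Pow (S - {M}). arrangements T \<times> arrangements (S - {M} - T)) (arrangements S)"
    (is "bij_betw ?h ?D _")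
proof (rule bij_betw_imageI[OF inj_on_arrangements_split])
  show "?h ` ?D = arrangements S"
  proof (intro equalityI subsetI)
    fix xs assume "xs \<in> ?h ` ?D"
    then obtain T l r where "(T, l, r) \<in> ?D" and xs: "xs = l @ M # r" by auto
    then have "T \<subseteq> S - {M}" "distinct l" "set l = T" "distinct r" "set r = S - {M} - T"
      by (simp_all add: arrangements_def)
    then show "xs \<in> arrangements S"
      using assms unfolding xs arrangements_def by auto
  next
    fix xs assume "xs \<in> arrangements S"
    then have xs: "distinct xs" "set xs = S" by (simp_all add: arrangements_def)
    then obtain l r where lr: "xs = l @ M # r"
      using assms by (metis split_list)
    have "distinct l" "distinct r" "M \<notin> set l" "M \<notin> set r" "set l \<inter> set r = {}"
      using xs(1) unfolding lr by auto
    moreover have "set l \<union> {M} \<union> set r = S"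
      using xs(2) unfolding lr by auto
    ultimately have "(set l, l, r) \<in> ?D"
      unfolding arrangements_def by blast
    then show "xs \<in> ?h ` ?D"
      by (rule image_eqI[rotated]) (simp add: lr)
  qed
qed

lemma sum_arrangements_split:
  assumes "finite S" "M \<in> S"
  shows "(\<Sum>xs\<in>arrangements S. F xs)
       = (\<Sum>T\<in>Pow (S - {M}). \<Sum>l\<in>arrangements T. \<Sum>r\<in>arrangements (S - {M} - T). F (l @ M # r))"
proof -
  let ?D = "SIGMA T:Pow (S - {M}). arrangements T \<times> arrangements (S - {M} - T)"
  have fin_parts: "finite (arrangements T \<times> arrangements (S - {M} - T))" if "T \<in> Pow (S - {M})" for T
    using that assms(1) by (intro finite_cartesian_product finite_arrangements) (auto dest: finite_subset)
  have "(\<Sum>xs\<in>arrangements S. F xs) = (\<Sum>(T, l, r)\<in>?D. F (l @ M # r))"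
    using sum.reindex_bij_betw[OF bij_betw_arrangements_split[OF assms(2)], of F]
    by (simp add: case_prod_beta')
  also have "\<dots> = (\<Sum>T\<in>Pow (S - {M}). \<Sum>(l, r)\<in>arrangements T \<times> arrangements (S - {M} - T). F (l @ M # r))"
    using assms(1) fin_parts by (intro sum.Sigma[symmetric]) auto
  finally show ?thesis
    by (simp add: sum.cartesian_product)
qed

lemma sum_Pow_card:
  assumes "finite A"
  shows "(\<Sum>T\<in>Pow A. \<phi> (card T) (card (A - T)))
       = (\<Sum>k=0..card A. of_nat (card A choose k) * (\<phi> k (card A - k) :: 'a::comm_ring_1))"
proof -
  have "(\<Sum>T\<in>Pow A. \<phi> (card T) (card (A - T)))
      = (\<Sum>k\<in>{0..card A}. \<Sum>T\<in>{T. T \<in> Pow A \<and> card T = k}. \<phi> (card T) (card (A - T)))"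
    by (rule sum.group[symmetric]) (use assms in \<open>auto intro: card_mono\<close>)
  also have "\<dots> = (\<Sum>k\<in>{0..card A}. \<Sum>T\<in>{T. T \<subseteq> A \<and> card T = k}. \<phi> k (card A - k))"
    using assms by (intro sum.cong refl) (auto, metis card_Diff_subset finite_subset)
  finally show ?thesis
    using assms by (simp add: n_subsets)
qed

lemma Max_Diff_less: "finite S \<Longrightarrow> z \<in> S - {Max S} \<Longrightarrow> z < Max S"
  by (simp add: order.strict_iff_order)

lemma card_less_if_subset_Diff: "finite S \<Longrightarrow> M \<in> S \<Longrightarrow> T \<subseteq> S - {M} \<Longrightarrow> card T < card S"
  by (rule psubset_card_mono) auto

lemma sum_arrangements_split_Max:
  fixes F GA GB :: "nat list \<Rightarrow> 'a::comm_ring_1"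
  assumes card: "card S = Suc n"
    and F: "\<And>l r. distinct (l @ Max S # r) \<Longrightarrow> set (l @ Max S # r) = S \<Longrightarrow>
              \<forall>z\<in>set l \<union> set r. z < Max S \<Longrightarrow> F (l @ Max S # r) = GA l * c (length l) (length r) * GB r"
    and GA: "\<And>T. T \<subseteq> S - {Max S} \<Longrightarrow> (\<Sum>l\<in>arrangements T. GA l) = ga (card T)"
    and GB: "\<And>T. T \<subseteq> S - {Max S} \<Longrightarrow> (\<Sum>r\<in>arrangements T. GB r) = gb (card T)"
  shows "(\<Sum>xs\<in>arrangements S. F xs) = (\<Sum>k=0..n. of_nat (n choose k) * (ga k * c k (n - k) * gb (n - k)))"
proof -
  let ?M = "Max S"
  have fin: "finite S" and "S \<noteq> {}" using card card.infinite by fastforce+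
  then have M: "?M \<in> S" "\<forall>z\<in>S - {?M}. z < ?M" by (auto intro: Max_Diff_less)
  have cardM: "card (S - {?M}) = n" using card M(1) by simp
  have "(\<Sum>xs\<in>arrangements S. F xs)
      = (\<Sum>T\<in>Pow (S - {?M}). ga (card T) * c (card T) (card (S - {?M} - T)) * gb (card (S - {?M} - T)))"
  proof (subst sum_arrangements_split[OF fin M(1)], rule sum.cong)
    fix T assume T: "T \<in> Pow (S - {?M})"
    have "F (l @ ?M # r) = GA l * c (card T) (card (S - {?M} - T)) * GB r"
      if "l \<in> arrangements T" "r \<in> arrangements (S - {?M} - T)" for l r
    proof -
      have "distinct (l @ ?M # r)" "set (l @ ?M # r) = S" "\<forall>z\<in>set l \<union> set r. z < ?M"
        using that T M unfolding arrangements_def by auto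
      then show ?thesis
        using F length_arrangement[OF that(1)] length_arrangement[OF that(2)] by simp
    qed
    then have "(\<Sum>l\<in>arrangements T. \<Sum>r\<in>arrangements (S - {?M} - T). F (l @ ?M # r))
        = (\<Sum>l\<in>arrangements T. \<Sum>r\<in>arrangements (S - {?M} - T).
             GA l * c (card T) (card (S - {?M} - T)) * GB r)"
      by (intro sum.cong refl) simp
    also have "\<dots> = (\<Sum>l\<in>arrangements T. GA l) * c (card T) (card (S - {?M} - T))
        * (\<Sum>r\<in>arrangements (S - {?M} - T). GB r)"
      by (simp add: sum_distrib_left sum_distrib_right mult_ac)
    finally show "(\<Sum>l\<in>arrangements T. \<Sum>r\<in>arrangements (S - {?M} - T). F (l @ ?M # r))
        = ga (card T) * c (card T) (card (S - {?M} - T)) * gb (card (S - {?M} - T))"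
      using T by (simp add: GA GB Diff_subset)
  qed simp
  also have "\<dots> = (\<Sum>k=0..n. of_nat (n choose k) * (ga k * c k (n - k) * gb (n - k)))"
    using sum_Pow_card[of "S - {?M}" "\<lambda>i j. ga i * c i j * gb j"] fin cardM by simp
  finally show ?thesis .
qed

section \<open>Permutation statistics as neighbour counts\<close>

definition padded :: "nat \<Rightarrow> nat list \<Rightarrow> nat \<Rightarrow> nat \<Rightarrow> nat" where
  "padded a xs b i = (if i = 0 then a else if i \<le> length xs then xs ! (i - 1) else b)"

lemma pv_eq_padded: "pv xs = padded 0 xs 0"
  by (rule ext) (simp add: pv_def padded_def)

lemma padded_Cons_Suc: "padded a (x # xs) b (Suc i) = padded x xs b i"
  by (cases i) (auto simp: padded_def)

lemma pv_0 [simp]: "pv xs 0 = 0"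
  by (simp add: pv_def)

lemma pv_Suc_length [simp]: "pv xs (Suc (length xs)) = 0"
  by (simp add: pv_def)

lemma pv_Cons_Suc: "pv (z # xs) (Suc k) = (if k = 0 then z else pv xs k)"
  by (simp add: pv_eq_padded padded_Cons_Suc) (simp add: padded_def)

fun nbr_count :: "(nat \<Rightarrow> nat \<Rightarrow> nat \<Rightarrow> bool) \<Rightarrow> nat \<Rightarrow> nat list \<Rightarrow> nat \<Rightarrow> nat" where
  "nbr_count Q a [] b = 0"
| "nbr_count Q a (x # xs) b = (if Q a x (hd (xs @ [b])) then 1 else 0) + nbr_count Q x xs b"

lemma nbr_count_append_Cons:
  "nbr_count Q a (l @ y # r) b
     = nbr_count Q a l y + (if Q (last (a # l)) y (hd (r @ [b])) then 1 else 0) + nbr_count Q y r b"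
  by (induction l arbitrary: a) (auto simp: hd_append)

lemma card_filter_Suc_front:
  "card {i \<in> {1..Suc m}. P i} = (if P 1 then 1 else 0) + card {i \<in> {1..m}. P (Suc i)}"
proof -
  have split: "{i \<in> {1..Suc m}. P i} = (if P 1 then {1} else {}) \<union> Suc ` {i \<in> {1..m}. P (Suc i)}"
  proof (rule set_eqI)
    fix i show "i \<in> {i \<in> {1..Suc m}. P i} \<longleftrightarrow> i \<in> (if P 1 then {1} else {}) \<union> Suc ` {i \<in> {1..m}. P (Suc i)}"
      by (cases i; cases "i - 1") (auto simp: image_iff)
  qed
  show ?thesis
    unfolding split by (subst card_Un_disjoint) (auto simp: card_image)
qed

lemma card_filter_Suc_back:
  "card {i \<in> {1..Suc m}. P i} = card {i \<in> {1..m}. P i} + (if P (Suc m) then 1 else 0)"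
proof -
  have split: "{i \<in> {1..Suc m}. P i} = {i \<in> {1..m}. P i} \<union> (if P (Suc m) then {Suc m} else {})"
    by (auto simp: le_Suc_eq)
  show ?thesis
    unfolding split by (subst card_Un_disjoint) auto
qed

lemma card_nbr_positions:
  "card {i \<in> {1..length xs}. Q (padded a xs b (i - 1)) (padded a xs b i) (padded a xs b (i + 1))}
     = nbr_count Q a xs b"
proof (induction xs arbitrary: a)
  case (Cons x xs)
  let ?P = "\<lambda>i. Q (padded a (x # xs) b (i - 1)) (padded a (x # xs) b i) (padded a (x # xs) b (i + 1))"
  have "?P (Suc i) = Q (padded x xs b (i - 1)) (padded x xs b i) (padded x xs b (i + 1))" if "1 \<le> i" for i
    using that padded_Cons_Suc[of a x xs b "i - 1"] by (simp add: padded_Cons_Suc)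
  then have "{i \<in> {1..length xs}. ?P (Suc i)}
      = {i \<in> {1..length xs}. Q (padded x xs b (i - 1)) (padded x xs b i) (padded x xs b (i + 1))}"
    by auto
  moreover have "?P 1 = Q a x (hd (xs @ [b]))"
    by (cases xs) (simp_all add: padded_def)
  ultimately show ?case
    using Cons.IH[of x] by (simp only: length_Cons card_filter_Suc_front nbr_count.simps)
qed simp

lemma card_pv_positions:
  "card {i \<in> {1..length xs}. Q (pv xs (i - 1)) (pv xs i) (pv xs (i + 1))} = nbr_count Q 0 xs 0"
  using card_nbr_positions[where Q=Q and a=0 and xs=xs and b=0] by (simp add: pv_eq_padded)

lemma valleysV_eq_nbr_count: "valleysV xs = nbr_count (\<lambda>a x c. a > x \<and> x < c) 0 xs 0"
proof -
  have "{i \<in> {2..<length xs}. pv xs (i - 1) > pv xs i \<and> pv xs i < pv xs (i + 1)}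
      = {i \<in> {1..length xs}. pv xs (i - 1) > pv xs i \<and> pv xs i < pv xs (i + 1)}"
    by (auto simp: le_less Suc_le_eq intro: Suc_lessI)
  then show ?thesis
    unfolding valleysV_def card_pv_positions[symmetric] by simp
qed

lemma peaksW_eq_nbr_count: "peaksW xs = nbr_count (\<lambda>a x c. a < x \<and> x > c) 0 xs 0"
  unfolding peaksW_def card_pv_positions[symmetric] by simp

lemma rdd_eq_nbr_count: "rdd xs = nbr_count (\<lambda>a x c. a > x \<and> x > c) 0 xs 0"
proof -
  have "{i \<in> {2..length xs}. pv xs (i - 1) > pv xs i \<and> pv xs i > pv xs (i + 1)}
      = {i \<in> {1..length xs}. pv xs (i - 1) > pv xs i \<and> pv xs i > pv xs (i + 1)}"
    by (auto simp: le_less Suc_le_eq intro: Suc_lessI)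
  then show ?thesis
    unfolding rdd_def card_pv_positions[symmetric] by simp
qed

lemma lda_eq_nbr_count: "lda xs = nbr_count (\<lambda>a x c. a < x \<and> x < c) 0 xs 0"
proof -
  have "{i \<in> {1..<length xs}. pv xs (i - 1) < pv xs i \<and> pv xs i < pv xs (i + 1)}
      = {i \<in> {1..length xs}. pv xs (i - 1) < pv xs i \<and> pv xs i < pv xs (i + 1)}"
    by (auto simp: le_less)
  then show ?thesis
    unfolding lda_def card_pv_positions[symmetric] by simp
qed

lemma asc_eq_nbr_count: "asc xs = nbr_count (\<lambda>a x c. x < c) 0 xs 0"
proof -
  have "{i \<in> {1..<length xs}. pv xs i < pv xs (i + 1)} = {i \<in> {1..length xs}. pv xs i < pv xs (i + 1)}"
    by (auto simp: le_less)
  then show ?thesis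
    unfolding asc_def using card_pv_positions[where Q="\<lambda>a x c. x < c" and xs=xs] by simp
qed

text \<open>The padding value 0 makes a last entry \<open>> 0\<close> a descent, which \<open>des\<close> does not count.\<close>

lemma des_Suc_eq_nbr_count:
  assumes "xs \<noteq> []" "last xs > 0"
  shows "Suc (des xs) = nbr_count (\<lambda>a x c. x > c) 0 xs 0"
proof -
  obtain m where m: "length xs = Suc m" using assms(1) by (cases xs) auto
  have "pv xs (Suc m) > 0" "pv xs (Suc (Suc m)) = 0"
    using assms m by (simp_all add: pv_def last_conv_nth)
  moreover have "{i \<in> {1..<length xs}. pv xs i > pv xs (i + 1)} = {i \<in> {1..m}. pv xs i > pv xs (i + 1)}"
    using m by auto
  ultimately show ?thesis
    unfolding des_def card_pv_positions[where Q="\<lambda>a x c. x > c" and xs=xs, symmetric]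
    using card_filter_Suc_back[where m=m and P="\<lambda>i. pv xs i > pv xs (i + 1)"] m by simp
qed

lemma ball_pv_iff: "(\<forall>j\<in>{1..length xs}. P (pv xs j)) \<longleftrightarrow> (\<forall>y\<in>set xs. P y)"
proof
  assume P: "\<forall>j\<in>{1..length xs}. P (pv xs j)"
  show "\<forall>y\<in>set xs. P y"
  proof
    fix y assume "y \<in> set xs"
    then obtain i where "i < length xs" "xs ! i = y" by (auto simp: in_set_conv_nth)
    then show "P y" using P[rule_format, of "Suc i"] by (simp add: pv_def)
  qed
qed (auto simp: pv_def)

lemma LRmax_snoc: "LRmax (xs @ [z]) = LRmax xs + (if \<forall>y\<in>set xs. y < z then 1 else 0)"
proof -
  let ?m = "length xs"
  have pv_snoc: "pv (xs @ [z]) k = pv xs k" if "k \<le> ?m" for k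
    using that by (auto simp: pv_def nth_append)
  have "{i \<in> {1..?m}. \<forall>j\<in>{1..<i}. pv (xs @ [z]) j < pv (xs @ [z]) i}
      = {i \<in> {1..?m}. \<forall>j\<in>{1..<i}. pv xs j < pv xs i}"
    by (auto simp: pv_snoc)
  moreover have "(\<forall>j\<in>{1..<Suc ?m}. pv (xs @ [z]) j < pv (xs @ [z]) (Suc ?m)) \<longleftrightarrow> (\<forall>j\<in>{1..?m}. pv xs j < z)"
    using pv_snoc by (auto simp: pv_def[of _ "Suc ?m"])
  ultimately show ?thesis
    using ball_pv_iff[of xs "\<lambda>y. y < z"]
    unfolding LRmax_def length_append_singleton card_filter_Suc_back by simp
qed

lemma RLmax_Cons: "RLmax (z # xs) = RLmax xs + (if \<forall>y\<in>set xs. y < z then 1 else 0)"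
proof -
  let ?m = "length xs"
  let ?P = "\<lambda>i. \<forall>j\<in>{i<..Suc ?m}. pv (z # xs) j < pv (z # xs) i"
  have shift: "{Suc i<..Suc ?m} = Suc ` {i<..?m}" for i
  proof (rule set_eqI)
    fix x show "x \<in> {Suc i<..Suc ?m} \<longleftrightarrow> x \<in> Suc ` {i<..?m}"
      by (cases x) auto
  qed
  have "?P 1 \<longleftrightarrow> (\<forall>j\<in>{1..?m}. pv xs j < z)"
    using shift[of 0] by (auto simp: pv_Cons_Suc)
  also have "\<dots> \<longleftrightarrow> (\<forall>y\<in>set xs. y < z)" by (rule ball_pv_iff)
  finally have "?P 1 \<longleftrightarrow> (\<forall>y\<in>set xs. y < z)" .
  moreover have "{i \<in> {1..?m}. ?P (Suc i)} = {i \<in> {1..?m}. \<forall>j\<in>{i<..?m}. pv xs j < pv xs i}"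
    by (auto simp: shift pv_Cons_Suc)
  ultimately show ?thesis
    unfolding RLmax_def length_Cons card_filter_Suc_front by simp
qed

lemma LRmax_append_Max:
  assumes "\<forall>y\<in>set l \<union> set r. y < M"
  shows "LRmax (l @ M # r) = Suc (LRmax l)"
  using assms
proof (induction r rule: rev_induct)
  case Nil then show ?case using LRmax_snoc[of l M] by simp
next
  case (snoc z r)
  then show ?case using LRmax_snoc[of "l @ M # r" z] by auto
qed

lemma RLmax_append_Max:
  assumes "\<forall>y\<in>set l \<union> set r. y < M"
  shows "RLmax (l @ M # r) = Suc (RLmax r)"
  using assms
proof (induction l)
  case Nil then show ?case using RLmax_Cons[of M r] by simp
next
  case (Cons z l)
  then show ?case using RLmax_Cons[of z "l @ M # r"] by auto
qed

fun nbr_weight :: "(bool \<Rightarrow> bool \<Rightarrow> 'a::comm_ring_1) \<Rightarrow> nat \<Rightarrow> nat list \<Rightarrow> nat \<Rightarrow> 'a" where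
  "nbr_weight t a [] b = 1"
| "nbr_weight t a (x # xs) b = t (a < x) (x < hd (xs @ [b])) * nbr_weight t x xs b"

lemma nbr_weight_append_Cons:
  "nbr_weight t a (l @ y # r) b
     = nbr_weight t a l y * t (last (a # l) < y) (y < hd (r @ [b])) * nbr_weight t y r b"
  by (induction l arbitrary: a) (auto simp: mult_ac)

lemma last_Cons_less_Max:
  fixes M :: nat
  assumes "\<forall>z\<in>set l. z < M"
  shows "last (a # l) < M \<longleftrightarrow> l \<noteq> [] \<or> a < M"
  using assms by (cases "l = []") auto

lemma hd_append_less_Max:
  fixes M :: nat
  assumes "\<forall>z\<in>set r. z < M"
  shows "M < hd (r @ [b]) \<longleftrightarrow> r = [] \<and> M < b"
  using assms by (cases r) auto

lemma nbr_weight_split_Max: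
  assumes "\<forall>z\<in>set l \<union> set r. z < M"
  shows "nbr_weight t a (l @ M # r) b
     = nbr_weight t a l M * t (l \<noteq> [] \<or> a < M) (r = [] \<and> M < b) * nbr_weight t M r b"
  using assms by (simp add: nbr_weight_append_Cons last_Cons_less_Max hd_append_less_Max)

text \<open>Between its neighbours an entry is a valley (weight \<open>u1\<close>), a peak (\<open>u2\<close>), a double descent
  (\<open>u3\<close>) or a double ascent (\<open>u4\<close>).\<close>

definition pattern_weight :: "'a \<Rightarrow> 'a \<Rightarrow> 'a \<Rightarrow> 'a \<Rightarrow> bool \<Rightarrow> bool \<Rightarrow> 'a" where
  "pattern_weight u1 u2 u3 u4 p q = (if p then if q then u4 else u2 else if q then u1 else u3)"

definition asc_des_weight :: "'a \<Rightarrow> 'a \<Rightarrow> bool \<Rightarrow> bool \<Rightarrow> 'a" where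
  "asc_des_weight x y p q = (if q then x else y)"

lemma nbr_weight_pattern_weight:
  fixes u1 u2 u3 u4 :: "'a::comm_ring_1"
  assumes "distinct xs" "a \<notin> set xs" "b \<notin> set xs"
  shows "nbr_weight (pattern_weight u1 u2 u3 u4) a xs b
     = u1 ^ nbr_count (\<lambda>a x c. a > x \<and> x < c) a xs b * u2 ^ nbr_count (\<lambda>a x c. a < x \<and> x > c) a xs b
       * u3 ^ nbr_count (\<lambda>a x c. a > x \<and> x > c) a xs b * u4 ^ nbr_count (\<lambda>a x c. a < x \<and> x < c) a xs b"
  using assms
proof (induction xs arbitrary: a)
  case (Cons x xs)
  have "x \<noteq> a" "x \<noteq> hd (xs @ [b])" using Cons.prems by (cases xs; auto)+
  then show ?case
    using Cons by (auto simp: pattern_weight_def linorder_neq_iff mult_ac)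
qed simp

lemma nbr_weight_asc_des_weight:
  fixes x y :: "'a::comm_ring_1"
  assumes "distinct xs" "b \<notin> set xs"
  shows "nbr_weight (asc_des_weight x y) a xs b
     = x ^ nbr_count (\<lambda>a x c. x < c) a xs b * y ^ nbr_count (\<lambda>a x c. x > c) a xs b"
  using assms
proof (induction xs arbitrary: a)
  case (Cons z xs)
  have "z \<noteq> hd (xs @ [b])" using Cons.prems by (cases xs; auto)
  then show ?case
    using Cons by (auto simp: asc_des_weight_def linorder_neq_iff mult_ac)
qed simp

text \<open>The recursion splits an arrangement at its largest entry; see \<open>sum_arrangements_nbr_weight\<close>.\<close>

fun nbr_poly :: "(bool \<Rightarrow> bool \<Rightarrow> 'a::comm_ring_1) \<Rightarrow> nat \<Rightarrow> 'a" where
  "nbr_poly t 0 = 1"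
| "nbr_poly t (Suc n) = (\<Sum>j=0..n. of_nat (n choose j) * (nbr_poly t j * t (0 < j) (n - j = 0) * nbr_poly t (n - j)))"

declare nbr_poly.simps(2) [simp del]

lemma sum_arrangements_nbr_weight:
  assumes "finite S" "\<forall>z\<in>S. z < a \<and> z < b"
  shows "(\<Sum>xs\<in>arrangements S. nbr_weight t a xs b) = nbr_poly t (card S)"
  using assms
proof (induction "card S" arbitrary: S a b rule: less_induct)
  case less
  show ?case
  proof (cases "card S")
    case 0 then show ?thesis using less.prems by simp
  next
    case (Suc n)
    let ?M = "Max S"
    have M: "?M \<in> S" using Suc less.prems(1) by (intro Max_in) auto
    have IH: "(\<Sum>xs\<in>arrangements T. nbr_weight t a' xs b') = nbr_poly t (card T)"
      if "T \<subseteq> S - {?M}" "\<forall>z\<in>T. z < a' \<and> z < b'" for T a' b'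
      using that less.prems(1) M
      by (intro less.hyps card_less_if_subset_Diff) (auto dest: finite_subset)
    have "(\<Sum>xs\<in>arrangements S. nbr_weight t a xs b)
        = (\<Sum>k=0..n. of_nat (n choose k) * (nbr_poly t k * t (0 < k) (n - k = 0) * nbr_poly t (n - k)))"
    proof (rule sum_arrangements_split_Max[OF Suc])
      fix l r assume "\<forall>z\<in>set l \<union> set r. z < ?M"
      moreover have "?M < a" "?M < b" using M less.prems(2) by auto
      ultimately show "nbr_weight t a (l @ ?M # r) b
          = nbr_weight t a l ?M * t (0 < length l) (length r = 0) * nbr_weight t ?M r b"
        by (simp add: nbr_weight_split_Max)
    next
      fix T assume "T \<subseteq> S - {?M}"
      then show "(\<Sum>l\<in>arrangements T. nbr_weight t a l ?M) = nbr_poly t (card T)"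
        using less.prems(1,2) by (intro IH) (auto intro: Max_Diff_less)
    next
      fix T assume "T \<subseteq> S - {?M}"
      then show "(\<Sum>r\<in>arrangements T. nbr_weight t ?M r b) = nbr_poly t (card T)"
        using less.prems(1,2) by (intro IH) (auto intro: Max_Diff_less)
    qed
    then show ?thesis
      using Suc by (simp add: nbr_poly.simps(2))
  qed
qed

text \<open>The weight of a left-to-right (resp. right-to-left) maximum together with the \<open>m\<close> smaller entries
  that follow (resp. precede) it up to the next record.\<close>

definition LRmax_block :: "'a \<Rightarrow> (bool \<Rightarrow> bool \<Rightarrow> 'a::comm_ring_1) \<Rightarrow> nat \<Rightarrow> 'a" where
  "LRmax_block \<alpha> t m = \<alpha> * t True (m = 0) * nbr_poly t m"

definition RLmax_block :: "'a \<Rightarrow> (bool \<Rightarrow> bool \<Rightarrow> 'a::comm_ring_1) \<Rightarrow> nat \<Rightarrow> 'a" where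
  "RLmax_block \<beta> t m = \<beta> * t (0 < m) False * nbr_poly t m"

lemma sum_arrangements_LRmax:
  assumes "finite S" "0 \<notin> S" "\<forall>z\<in>S. z < b"
  shows "(\<Sum>xs\<in>arrangements S. \<alpha> ^ LRmax xs * nbr_weight t 0 xs b) = binom_exp (LRmax_block \<alpha> t) (card S)"
  using assms
proof (induction "card S" arbitrary: S b rule: less_induct)
  case less
  show ?case
  proof (cases "card S")
    case 0 then show ?thesis using less.prems by (simp add: LRmax_def)
  next
    case (Suc n)
    let ?M = "Max S"
    have M: "?M \<in> S" using Suc less.prems(1) by (intro Max_in) auto
    have "(\<Sum>xs\<in>arrangements S. \<alpha> ^ LRmax xs * nbr_weight t 0 xs b)
        = (\<Sum>k=0..n. of_nat (n choose k) *
             (binom_exp (LRmax_block \<alpha> t) k * (\<alpha> * t True (n - k = 0)) * nbr_poly t (n - k)))"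
    proof (rule sum_arrangements_split_Max[OF Suc])
      fix l r assume "\<forall>z\<in>set l \<union> set r. z < ?M"
      moreover have "0 < ?M" "?M < b" using M less.prems(2,3) by (auto intro: gr0I)
      ultimately show "\<alpha> ^ LRmax (l @ ?M # r) * nbr_weight t 0 (l @ ?M # r) b
          = \<alpha> ^ LRmax l * nbr_weight t 0 l ?M * (\<alpha> * t True (length r = 0)) * nbr_weight t ?M r b"
        by (simp add: nbr_weight_split_Max LRmax_append_Max mult_ac)
    next
      fix T assume T: "T \<subseteq> S - {?M}"
      show "(\<Sum>l\<in>arrangements T. \<alpha> ^ LRmax l * nbr_weight t 0 l ?M) = binom_exp (LRmax_block \<alpha> t) (card T)"
        using T less.prems M
        by (intro less.hyps card_less_if_subset_Diff) (auto intro: Max_Diff_less dest: finite_subset)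
    next
      fix T assume "T \<subseteq> S - {?M}"
      then show "(\<Sum>r\<in>arrangements T. nbr_weight t ?M r b) = nbr_poly t (card T)"
        using less.prems by (intro sum_arrangements_nbr_weight) (auto intro: Max_Diff_less dest: finite_subset)
    qed
    then show ?thesis
      using Suc by (simp add: binom_exp.simps(2) LRmax_block_def mult_ac)
  qed
qed

lemma sum_arrangements_RLmax:
  assumes "finite S" "0 \<notin> S" "\<forall>z\<in>S. z < a"
  shows "(\<Sum>xs\<in>arrangements S. \<beta> ^ RLmax xs * nbr_weight t a xs 0) = binom_exp (RLmax_block \<beta> t) (card S)"
  using assms
proof (induction "card S" arbitrary: S a rule: less_induct)
  case less
  show ?case
  proof (cases "card S")
    case 0 then show ?thesis using less.prems by (simp add: RLmax_def)
  next
    case (Suc n)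
    let ?M = "Max S"
    have M: "?M \<in> S" using Suc less.prems(1) by (intro Max_in) auto
    have "(\<Sum>xs\<in>arrangements S. \<beta> ^ RLmax xs * nbr_weight t a xs 0)
        = (\<Sum>k=0..n. of_nat (n choose k) *
             (nbr_poly t k * (\<beta> * t (0 < k) False) * binom_exp (RLmax_block \<beta> t) (n - k)))"
    proof (rule sum_arrangements_split_Max[OF Suc])
      fix l r assume "\<forall>z\<in>set l \<union> set r. z < ?M"
      moreover have "?M < a" using M less.prems(3) by auto
      ultimately show "\<beta> ^ RLmax (l @ ?M # r) * nbr_weight t a (l @ ?M # r) 0
          = nbr_weight t a l ?M * (\<beta> * t (0 < length l) False) * (\<beta> ^ RLmax r * nbr_weight t ?M r 0)"
        by (simp add: nbr_weight_split_Max RLmax_append_Max mult_ac)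
    next
      fix T assume "T \<subseteq> S - {?M}"
      then show "(\<Sum>l\<in>arrangements T. nbr_weight t a l ?M) = nbr_poly t (card T)"
        using less.prems by (intro sum_arrangements_nbr_weight) (auto intro: Max_Diff_less dest: finite_subset)
    next
      fix T assume T: "T \<subseteq> S - {?M}"
      show "(\<Sum>r\<in>arrangements T. \<beta> ^ RLmax r * nbr_weight t ?M r 0) = binom_exp (RLmax_block \<beta> t) (card T)"
        using T less.prems M
        by (intro less.hyps card_less_if_subset_Diff) (auto intro: Max_Diff_less dest: finite_subset)
    qed
    also have "\<dots> = binom_conv (binom_exp (RLmax_block \<beta> t)) (RLmax_block \<beta> t) n"
      by (subst binom_conv_commute) (simp add: binom_conv_def RLmax_block_def mult_ac)
    finally show ?thesis
      using Suc by (simp add: binom_exp_Suc_conv)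
  qed
qed

lemma perms_eq_arrangements: "perms m = arrangements {1..m}"
  by (simp add: perms_def arrangements_def)

lemma sum_perms_split_Max:
  fixes F :: "nat list \<Rightarrow> 'a::comm_ring_1"
  assumes "\<And>l r. distinct (l @ Suc n # r) \<Longrightarrow> set (l @ Suc n # r) = {1..Suc n} \<Longrightarrow>
      F (l @ Suc n # r) = \<alpha> ^ LRmax l * nbr_weight t 0 l (Suc n) * (\<beta> ^ RLmax r * nbr_weight t (Suc n) r 0)"
  shows "(\<Sum>\<sigma>\<in>perms (Suc n). F \<sigma>) = binom_exp (\<lambda>m. LRmax_block \<alpha> t m + RLmax_block \<beta> t m) n"
proof -
  have Max: "Max {1..Suc n} = Suc n" by (simp add: Max_eq_iff)
  have "(\<Sum>\<sigma>\<in>perms (Suc n). F \<sigma>)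
      = (\<Sum>k=0..n. of_nat (n choose k) *
           (binom_exp (LRmax_block \<alpha> t) k * 1 * binom_exp (RLmax_block \<beta> t) (n - k)))"
    unfolding perms_eq_arrangements
  proof (rule sum_arrangements_split_Max; (unfold Max)?)
    show "card {1..Suc n} = Suc n" by simp
  next
    fix l r assume "distinct (l @ Suc n # r)" "set (l @ Suc n # r) = {1..Suc n}"
    then show "F (l @ Suc n # r)
        = \<alpha> ^ LRmax l * nbr_weight t 0 l (Suc n) * 1 * (\<beta> ^ RLmax r * nbr_weight t (Suc n) r 0)"
      using assms by simp
  next
    fix T assume "T \<subseteq> {1..Suc n} - {Suc n}"
    then show "(\<Sum>l\<in>arrangements T. \<alpha> ^ LRmax l * nbr_weight t 0 l (Suc n))
        = binom_exp (LRmax_block \<alpha> t) (card T)"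
      by (intro sum_arrangements_LRmax) (auto dest: finite_subset)
  next
    fix T assume "T \<subseteq> {1..Suc n} - {Suc n}"
    then show "(\<Sum>r\<in>arrangements T. \<beta> ^ RLmax r * nbr_weight t (Suc n) r 0)
        = binom_exp (RLmax_block \<beta> t) (card T)"
      by (intro sum_arrangements_RLmax) (auto dest: finite_subset)
  qed
  also have "\<dots> = binom_conv (binom_exp (LRmax_block \<alpha> t)) (binom_exp (RLmax_block \<beta> t)) n"
    by (simp add: binom_conv_def mult.assoc)
  finally show ?thesis
    by (simp add: binom_conv_binom_exp)
qed

lemma perm_split_Max_bounds:
  assumes "distinct (l @ Suc n # r)" "set (l @ Suc n # r) = {1..Suc n}"
  shows "0 \<notin> set (l @ Suc n # r)" "\<forall>y\<in>set l \<union> set r. y < Suc n"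
proof -
  show "0 \<notin> set (l @ Suc n # r)" using assms(2) by auto
  have "\<forall>y\<in>set l \<union> set r. y \<noteq> Suc n" using assms(1) by auto
  moreover have "\<forall>y\<in>set l \<union> set r. y \<le> Suc n" using assms(2) by auto
  ultimately show "\<forall>y\<in>set l \<union> set r. y < Suc n" by (meson le_neq_implies_less)
qed

text \<open>The maximum of a permutation is always a peak and a descent, and always a left-to-right and a
  right-to-left maximum; these are the factors removed by the \<open>- 1\<close> in the exponents.\<close>

lemma Ppoly_summand_split:
  fixes u1 u2 u3 u4 \<alpha> \<beta> :: "'a::comm_ring_1"
  assumes d: "distinct (l @ M # r)" and z: "0 \<notin> set (l @ M # r)" and m: "\<forall>y\<in>set l \<union> set r. y < M"
  shows "u1 ^ valleysV (l @ M # r) * u2 ^ (peaksW (l @ M # r) - 1) * u3 ^ rdd (l @ M # r)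
       * u4 ^ lda (l @ M # r) * \<alpha> ^ (LRmax (l @ M # r) - 1) * \<beta> ^ (RLmax (l @ M # r) - 1)
     = \<alpha> ^ LRmax l * nbr_weight (pattern_weight u1 u2 u3 u4) 0 l M
       * (\<beta> ^ RLmax r * nbr_weight (pattern_weight u1 u2 u3 u4) M r 0)"
proof -
  have "0 < M" using z by (auto intro: gr0I)
  then have "last (0 # l) < M" "hd (r @ [0]) < M"
    using m by (simp add: last_Cons_less_Max, cases r, auto)
  moreover have "distinct l" "0 \<notin> set l" "M \<notin> set l" "distinct r" "0 \<notin> set r" "M \<notin> set r"
    using d z by auto
  ultimately show ?thesis
    unfolding valleysV_eq_nbr_count peaksW_eq_nbr_count rdd_eq_nbr_count lda_eq_nbr_count
      LRmax_append_Max[OF m] RLmax_append_Max[OF m] nbr_count_append_Cons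
    by (simp add: nbr_weight_pattern_weight power_add mult_ac)
qed

lemma Apoly_summand_split:
  fixes x y a b :: "'a::comm_ring_1"
  assumes d: "distinct (l @ M # r)" and z: "0 \<notin> set (l @ M # r)" and m: "\<forall>y\<in>set l \<union> set r. y < M"
  shows "x ^ asc (l @ M # r) * y ^ des (l @ M # r) * a ^ (LRmax (l @ M # r) - 1) * b ^ (RLmax (l @ M # r) - 1)
     = a ^ LRmax l * nbr_weight (asc_des_weight x y) 0 l M * (b ^ RLmax r * nbr_weight (asc_des_weight x y) M r 0)"
proof -
  have "0 < M" using z by (auto intro: gr0I)
  then have R: "hd (r @ [0]) < M"
    using m by (cases r) auto
  have "last (l @ M # r) \<in> set (l @ M # r)" by (rule last_in_set) simp
  then have "last (l @ M # r) > 0" using z by (auto intro: gr0I)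
  then have "Suc (des (l @ M # r)) = Suc (nbr_count (\<lambda>a x c. x > c) 0 l M + nbr_count (\<lambda>a x c. x > c) M r 0)"
    using des_Suc_eq_nbr_count[of "l @ M # r"] R by (simp add: nbr_count_append_Cons)
  moreover have "distinct l" "M \<notin> set l" "distinct r" "0 \<notin> set r"
    using d z by auto
  ultimately show ?thesis
    using R unfolding asc_eq_nbr_count nbr_count_append_Cons LRmax_append_Max[OF m] RLmax_append_Max[OF m]
    by (simp add: nbr_weight_asc_des_weight power_add mult_ac)
qed

lemma Ppoly_eq_binom_exp:
  "Ppoly n u1 u2 u3 u4 \<alpha> \<beta>
     = binom_exp (\<lambda>m. LRmax_block \<alpha> (pattern_weight u1 u2 u3 u4) m
                    + RLmax_block \<beta> (pattern_weight u1 u2 u3 u4) m) n"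
  unfolding Ppoly_def Suc_eq_plus1[symmetric]
  by (rule sum_perms_split_Max) (use Ppoly_summand_split perm_split_Max_bounds in blast)

lemma Apoly_eq_binom_exp:
  "Apoly n x y a b = binom_exp (\<lambda>m. LRmax_block a (asc_des_weight x y) m + RLmax_block b (asc_des_weight x y) m) n"
  unfolding Apoly_def Suc_eq_plus1[symmetric]
  by (rule sum_perms_split_Max) (use Apoly_summand_split perm_split_Max_bounds in blast)

lemma nbr_poly_Suc_Suc:
  "t True False * nbr_poly t (Suc (Suc n))
     = (t False False + t True True) * (t True False * nbr_poly t (Suc n))
       + (\<Sum>j=1..n. of_nat (Suc n choose j) * ((t True False * nbr_poly t j) * (t True False * nbr_poly t (Suc n - j))))"
proof -
  have "nbr_poly t (Suc (Suc n))
      = t False False * nbr_poly t (Suc n) + t True True * nbr_poly t (Suc n)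
        + (\<Sum>j=1..n. of_nat (Suc n choose j) * (nbr_poly t j * t (0 < j) (Suc n - j = 0) * nbr_poly t (Suc n - j)))"
    by (simp add: nbr_poly.simps(2)[of t "Suc n"] sum.atLeast0_atMost_Suc sum.atLeast_Suc_atMost mult_ac)
  also have "(\<Sum>j=1..n. of_nat (Suc n choose j) * (nbr_poly t j * t (0 < j) (Suc n - j = 0) * nbr_poly t (Suc n - j)))
      = (\<Sum>j=1..n. of_nat (Suc n choose j) * (nbr_poly t j * t True False * nbr_poly t (Suc n - j)))"
    by (rule sum.cong) auto
  finally show ?thesis
    by (simp add: algebra_simps sum_distrib_left)
qed

text \<open>In \<open>nbr_poly_Suc_Suc\<close> the normalised polynomial \<open>t True False * nbr_poly t\<close> recurs on itself, with
  \<open>t\<close> entering only through \<open>t False False + t True True\<close>; the start value is the peak-valley product.\<close>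

lemma peak_nbr_poly_invariant:
  assumes "t1 True False * t1 False True = t2 True False * t2 False True"
    and "t1 False False + t1 True True = t2 False False + t2 True True"
    and "0 < m"
  shows "t1 True False * nbr_poly t1 m = t2 True False * nbr_poly t2 m"
  using assms(3)
proof (induction m rule: less_induct)
  case (less m)
  then obtain k where m: "m = Suc k" by (cases m) auto
  show ?case
  proof (cases k)
    case 0 then show ?thesis using m assms(1) by (simp add: nbr_poly.simps(2))
  next
    case (Suc n)
    have IH: "t1 True False * nbr_poly t1 j = t2 True False * nbr_poly t2 j" if "0 < j" "j \<le> Suc n" for j
      using less.IH that m Suc by auto
    then have "(\<Sum>j=1..n. of_nat (Suc n choose j) * ((t1 True False * nbr_poly t1 j) * (t1 True False * nbr_poly t1 (Suc n - j))))
        = (\<Sum>j=1..n. of_nat (Suc n choose j) * ((t2 True False * nbr_poly t2 j) * (t2 True False * nbr_poly t2 (Suc n - j))))"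
      by (intro sum.cong) auto
    then show ?thesis
      unfolding m Suc nbr_poly_Suc_Suc using IH[of "Suc n"] assms(2) by simp
  qed
qed

lemma Ppoly_eq_Apoly_binomial_sum:
  fixes x y u1 u2 u3 u4 \<alpha> \<beta> a b :: "'a::comm_ring_1"
  assumes "x + y = u3 + u4" "x * y = u1 * u2" "a + b = \<alpha> + \<beta>"
  shows "Ppoly n u1 u2 u3 u4 \<alpha> \<beta>
     = (\<Sum>k=0..n. of_nat (n choose k) * Apoly k x y a b * (\<alpha> * u4 + \<beta> * u3 - a * x - b * y) ^ (n - k))"
proof -
  let ?P = "pattern_weight u1 u2 u3 u4" and ?A = "asc_des_weight x y"
  have "(a + b) * (y * nbr_poly ?A m) = (\<alpha> + \<beta>) * (u2 * nbr_poly ?P m)" if "0 < m" for m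
    using peak_nbr_poly_invariant[of ?P ?A m] assms that
    by (simp add: pattern_weight_def asc_des_weight_def mult.commute add.commute)
  then have "LRmax_block a ?A m + RLmax_block b ?A m + (if m = 0 then \<alpha> * u4 + \<beta> * u3 - a * x - b * y else 0)
      = LRmax_block \<alpha> ?P m + RLmax_block \<beta> ?P m" for m
    by (cases "m = 0")
      (simp_all add: LRmax_block_def RLmax_block_def pattern_weight_def asc_des_weight_def algebra_simps)
  then show ?thesis
    unfolding Apoly_eq_binom_exp binom_conv_power Ppoly_eq_binom_exp by presburger
qed

theorem theorem6p2:
  fixes x y u1 u2 u3 u4 \<alpha> \<beta> :: "'a::comm_ring_1" and n :: nat
  assumes "x + y = u3 + u4" and "x * y = u1 * u2"
  shows "Ppoly n u1 u2 u3 u4 \<alpha> \<beta>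
           = (\<Sum>k=0..n. of_nat (n choose k) * Apoly k x y 0 (\<alpha> + \<beta>)
                 * (\<alpha> * x - \<beta> * y + (\<beta> - \<alpha>) * u3) ^ (n - k))
       \<and> Ppoly n u1 u2 u3 u4 \<alpha> \<beta>
           = (\<Sum>k=0..n. of_nat (n choose k) * Apoly k x y (\<alpha> + \<beta>) 0
                 * (\<alpha> * y - \<beta> * x + (\<beta> - \<alpha>) * u3) ^ (n - k))"
proof -
  have u4: "u4 = x + y - u3" using assms(1) by (simp add: algebra_simps)
  have "\<alpha> * u4 + \<beta> * u3 - 0 * x - (\<alpha> + \<beta>) * y = \<alpha> * x - \<beta> * y + (\<beta> - \<alpha>) * u3"
    and "\<alpha> * u4 + \<beta> * u3 - (\<alpha> + \<beta>) * x - 0 * y = \<alpha> * y - \<beta> * x + (\<beta> - \<alpha>) * u3"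
    by (simp_all add: u4 algebra_simps)
  then show ?thesis
    using Ppoly_eq_Apoly_binomial_sum[OF assms, of 0 "\<alpha> + \<beta>" \<alpha> \<beta> n]
      Ppoly_eq_Apoly_binomial_sum[OF assms, of "\<alpha> + \<beta>" 0 \<alpha> \<beta> n]
    by simp
qed

end
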